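(* Let $P=\{S_1,\ldots,S_n\}$ be a homothetic square packing with radii $r_1,\ldots,r_n$ and centres $p_1,\ldots,p_n$, and suppose that for some $1\le s\le n-1$: (i) $\sum_{i=1}^s r_i=\sum_{i=s+1}^n r_i$; (ii) $p_1=(r_1,r_1)$ and $p_{s+1}=(r_{s+1},-r_{s+1})$; (iii) $p_i=\big(r_i+\sum_{j=1}^{i-1}2r_j,\ r_i\big)$ for all $2\le i\le s$, and $p_i=\big(r_i+\sum_{j=s+1}^{i-1}2r_j,\ -r_i\big)$ for all $s+2\le i\le n$. Then the graph $([n],E_y)$ is connected.
   Context: Let $S=\{(x,y): -1\le x,y\le 1\}$. A homothetic packing of $n$ squares is a set $P=\{S_1,\ldots,S_n\}$ with $S_i=r_iS+p_i$, $r_i>0$ (radii), $p_i=(x_i,y_i)\in\mathbb{R}^2$ (centres), such that distinct squares have disjoint interiors. $E_y$ is the set of unordered pairs $\{i,j\}$, $i\ne j$, with $S_i\cap S_j\neq\emptyset$ and $r_i+r_j=|y_i-y_j|\ge|x_i-x_j|$. *)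

theory Defs
  imports "HOL-Analysis.Analysis"
begin

text \<open>The square r S + p, where S = [-1,1]^2, as a subset of the plane real \<times> real.\<close>
definition square :: "real \<Rightarrow> real \<times> real \<Rightarrow> (real \<times> real) set" where
  "square r p = {q. \<bar>fst q - fst p\<bar> \<le> r \<and> \<bar>snd q - snd p\<bar> \<le> r}"

definition homothetic_packing :: "nat \<Rightarrow> (nat \<Rightarrow> real) \<Rightarrow> (nat \<Rightarrow> real \<times> real) \<Rightarrow> bool" where
  "homothetic_packing n r p \<longleftrightarrow>
     (\<forall>i\<in>{1..n}. r i > 0) \<and>
     (\<forall>i\<in>{1..n}. \<forall>j\<in>{1..n}. i \<noteq> j \<longrightarrow>
        interior (square (r i) (p i)) \<inter> interior (square (r j) (p j)) = {})"

definition Ey :: "nat \<Rightarrow> (nat \<Rightarrow> real) \<Rightarrow> (nat \<Rightarrow> real \<times> real) \<Rightarrow> (nat \<times> nat) set" where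
  "Ey n r p = {(i, j). i \<in> {1..n} \<and> j \<in> {1..n} \<and> i \<noteq> j \<and>
      square (r i) (p i) \<inter> square (r j) (p j) \<noteq> {} \<and>
      r i + r j = \<bar>snd (p i) - snd (p j)\<bar> \<and>
      \<bar>snd (p i) - snd (p j)\<bar> \<ge> \<bar>fst (p i) - fst (p j)\<bar>}"

definition graph_connected :: "nat \<Rightarrow> (nat \<times> nat) set \<Rightarrow> bool" where
  "graph_connected n E \<longleftrightarrow> (\<forall>i\<in>{1..n}. \<forall>j\<in>{1..n}. (i, j) \<in> E\<^sup>*)"

end

theory Submission
  imports Defs
begin

text \<open>The squares of each row sit side by side on the line y = 0, so the horizontal extents of the
top row tile the interval [0, L] with L = 2 (r_1 + ... + r_s), and by hypothesis (i) so do
those of the bottom row. A top and a bottom square whose extents share an abscissa x both contain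
(x, 0) and form an edge of E_y. Every bottom square therefore meets some top square, and two
consecutive top squares are linked through a bottom square containing their common corner on y = 0.\<close>

definition row_centre :: "nat \<Rightarrow> (nat \<Rightarrow> real) \<Rightarrow> nat \<Rightarrow> real" where
  "row_centre m r i = r i + 2 * (\<Sum>j=m..<i. r j)"

lemma row_centre_eq_pred_sum:
  assumes "1 \<le> i"
  shows "row_centre m r i = r i + (\<Sum>j=m..i-1. 2 * r j)"
proof -
  obtain k where "i = Suc k" using assms by (cases i) auto
  then show ?thesis
    by (simp add: row_centre_def atLeastLessThanSuc_atLeastAtMost sum_distrib_left)
qed

lemma row_centre_Suc:
  assumes "m \<le> i"
  shows "row_centre m r (Suc i) - r (Suc i) = row_centre m r i + r i"
  using assms by (simp add: row_centre_def)

lemma row_centre_extent: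
  fixes r :: "nat \<Rightarrow> real"
  assumes "i \<in> {m..M}" "\<And>j. j \<in> {m..M} \<Longrightarrow> 0 \<le> r j"
  shows "0 \<le> row_centre m r i - r i" "row_centre m r i + r i \<le> 2 * (\<Sum>j=m..M. r j)"
proof -
  show "0 \<le> row_centre m r i - r i"
    using assms by (auto simp: row_centre_def intro!: sum_nonneg)
  have "row_centre m r i + r i = 2 * (\<Sum>j=m..i. r j)"
    using assms(1) by (simp add: row_centre_def atLeastLessThanSuc_atLeastAtMost[symmetric])
  also have "\<dots> \<le> 2 * (\<Sum>j=m..M. r j)"
    using assms by (intro mult_left_mono sum_mono2) auto
  finally show "row_centre m r i + r i \<le> 2 * (\<Sum>j=m..M. r j)" .
qed

lemma row_covers:
  fixes r :: "nat \<Rightarrow> real"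
  assumes "m \<le> M" "\<And>j. j \<in> {m..M} \<Longrightarrow> 0 \<le> r j" "0 \<le> x" "x \<le> 2 * (\<Sum>j=m..M. r j)"
  shows "\<exists>i\<in>{m..M}. \<bar>x - row_centre m r i\<bar> \<le> r i"
  using assms
proof (induction M rule: dec_induct)
  case base
  then show ?case by (auto simp: row_centre_def)
next
  case (step M)
  show ?case
  proof (cases "x \<le> 2 * (\<Sum>j=m..M. r j)")
    case True
    then obtain i where "i \<in> {m..M}" "\<bar>x - row_centre m r i\<bar> \<le> r i"
      using step by auto
    then show ?thesis by (intro bexI[of _ i]) auto
  next
    case False
    have "(\<Sum>j=m..<Suc M. r j) = (\<Sum>j=m..M. r j)"
      by (simp add: atLeastLessThanSuc_atLeastAtMost)
    then show ?thesis
      using False step by (intro bexI[of _ "Suc M"]) (auto simp: row_centre_def)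
  qed
qed

lemma sym_Ey: "sym (Ey n r p)"
  unfolding Ey_def sym_def by (auto simp: Int_commute abs_minus_commute)

lemma Ey_if_common_abscissa:
  assumes "i \<in> {1..n}" "j \<in> {1..n}" "i \<noteq> j"
    and "snd (p i) = r i" "snd (p j) = - r j"
    and "\<bar>x - fst (p i)\<bar> \<le> r i" "\<bar>x - fst (p j)\<bar> \<le> r j"
  shows "(i, j) \<in> Ey n r p"
proof -
  have "(x, 0) \<in> square (r i) (p i) \<inter> square (r j) (p j)"
    using assms unfolding square_def by auto
  then have "square (r i) (p i) \<inter> square (r j) (p j) \<noteq> {}" by blast
  moreover have "\<bar>fst (p i) - fst (p j)\<bar> \<le> r i + r j" using assms(6,7) by linarith
  ultimately show ?thesis
    using assms unfolding Ey_def by auto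
qed

lemma graph_connected_if_reachable_from:
  assumes "sym E" "\<And>k. k \<in> {1..n} \<Longrightarrow> (v, k) \<in> E\<^sup>*"
  shows "graph_connected n E"
  unfolding graph_connected_def
proof (intro ballI)
  fix k l assume "k \<in> {1..n}" "l \<in> {1..n}"
  then have "(k, v) \<in> E\<^sup>*" "(v, l) \<in> E\<^sup>*"
    using assms sym_rtrancl[of E] by (auto dest: symD)
  then show "(k, l) \<in> E\<^sup>*" by (rule rtrancl_trans)
qed

locale two_square_rows =
  fixes n s :: nat and r :: "nat \<Rightarrow> real" and p :: "nat \<Rightarrow> real \<times> real"
  assumes radius_pos: "\<And>i. i \<in> {1..n} \<Longrightarrow> 0 < r i"
    and s_range: "1 \<le> s" "s < n"
    and rows_balanced: "(\<Sum>i=1..s. r i) = (\<Sum>i=s+1..n. r i)"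
    and top_centre: "\<And>i. i \<in> {1..s} \<Longrightarrow> p i = (row_centre 1 r i, r i)"
    and bottom_centre: "\<And>i. i \<in> {s+1..n} \<Longrightarrow> p i = (row_centre (s+1) r i, - r i)"
begin

definition row_length :: real where
  "row_length = 2 * (\<Sum>i=1..s. r i)"

lemma radius_nonneg: "i \<in> {1..n} \<Longrightarrow> 0 \<le> r i"
  using radius_pos by (simp add: less_imp_le)

lemma top_extent:
  assumes "i \<in> {1..s}"
  shows "0 \<le> fst (p i) - r i" "fst (p i) + r i \<le> row_length"
  using row_centre_extent[of i 1 s r] assms top_centre radius_nonneg s_range
  unfolding row_length_def by auto

lemma bottom_extent:
  assumes "j \<in> {s+1..n}"
  shows "0 \<le> fst (p j) - r j" "fst (p j) + r j \<le> row_length"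
  using row_centre_extent[of j "s+1" n r] assms bottom_centre radius_nonneg s_range
  unfolding row_length_def rows_balanced by auto

lemma top_row_covers:
  assumes "0 \<le> x" "x \<le> row_length"
  shows "\<exists>i\<in>{1..s}. \<bar>x - fst (p i)\<bar> \<le> r i"
  using row_covers[of 1 s r x] assms s_range radius_nonneg top_centre
  unfolding row_length_def by fastforce

lemma bottom_row_covers:
  assumes "0 \<le> x" "x \<le> row_length"
  shows "\<exists>j\<in>{s+1..n}. \<bar>x - fst (p j)\<bar> \<le> r j"
  using row_covers[of "s+1" n r x] assms s_range radius_nonneg bottom_centre
  unfolding row_length_def rows_balanced by fastforce

lemma top_bottom_edge:
  assumes "i \<in> {1..s}" "j \<in> {s+1..n}" "\<bar>x - fst (p i)\<bar> \<le> r i" "\<bar>x - fst (p j)\<bar> \<le> r j"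
  shows "(i, j) \<in> Ey n r p" "(j, i) \<in> Ey n r p"
proof -
  show "(i, j) \<in> Ey n r p"
    using assms s_range top_centre bottom_centre
    by (intro Ey_if_common_abscissa[where x = x]) auto
  then show "(j, i) \<in> Ey n r p"
    by (rule symD[OF sym_Ey])
qed

lemma top_row_reachable:
  assumes "1 \<le> i" "i \<le> s"
  shows "(1, i) \<in> (Ey n r p)\<^sup>*"
  using assms
proof (induction i rule: dec_induct)
  case base
  then show ?case by simp
next
  case (step k)
  define x where "x = fst (p k) + r k"
  have "0 \<le> x" "x \<le> row_length"
    using step top_extent[of k] radius_nonneg[of k] s_range by (auto simp: x_def)
  then obtain j where j: "j \<in> {s+1..n}" "\<bar>x - fst (p j)\<bar> \<le> r j"
    using bottom_row_covers by blast
  have "fst (p (Suc k)) - r (Suc k) = x"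
    using step top_centre row_centre_Suc[of 1 k r] by (simp add: x_def)
  then have edges: "(k, j) \<in> Ey n r p" "(j, Suc k) \<in> Ey n r p"
    using step j radius_nonneg[of k] radius_nonneg[of "Suc k"] s_range
    by (auto intro: top_bottom_edge(1)[of k j x] top_bottom_edge(2)[of "Suc k" j x] simp: x_def)
  have "(1, k) \<in> (Ey n r p)\<^sup>*"
    using step by simp
  with edges show ?case by (meson rtrancl_into_rtrancl)
qed

lemma reachable_from_first:
  assumes "k \<in> {1..n}"
  shows "(1, k) \<in> (Ey n r p)\<^sup>*"
proof (cases "k \<le> s")
  case True
  then show ?thesis using assms top_row_reachable by auto
next
  case False
  then have k: "k \<in> {s+1..n}" using assms by auto
  then obtain i where i: "i \<in> {1..s}" "\<bar>fst (p k) - fst (p i)\<bar> \<le> r i"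
    using top_row_covers[of "fst (p k)"] bottom_extent[OF k] radius_nonneg[of k] by auto
  then have "(i, k) \<in> Ey n r p"
    using k radius_nonneg[of k] by (intro top_bottom_edge) auto
  with i top_row_reachable show ?thesis by (meson atLeastAtMost_iff rtrancl_into_rtrancl)
qed

lemma graph_connected: "graph_connected n (Ey n r p)"
  using graph_connected_if_reachable_from[OF sym_Ey reachable_from_first] .

end

theorem lemma21:
  fixes n s :: nat and r :: "nat \<Rightarrow> real" and p :: "nat \<Rightarrow> real \<times> real"
  assumes pack: "homothetic_packing n r p"
    and s: "1 \<le> s" "s \<le> n - 1"
    and i: "(\<Sum>i=1..s. r i) = (\<Sum>i=s+1..n. r i)"
    and ii: "p 1 = (r 1, r 1)" "p (s+1) = (r (s+1), - r (s+1))"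
    and iii1: "\<forall>i. 2 \<le> i \<and> i \<le> s \<longrightarrow> p i = (r i + (\<Sum>j=1..i-1. 2 * r j), r i)"
    and iii2: "\<forall>i. s + 2 \<le> i \<and> i \<le> n \<longrightarrow> p i = (r i + (\<Sum>j=s+1..i-1. 2 * r j), - r i)"
  shows "graph_connected n (Ey n r p)"
proof -
  interpret two_square_rows n s r p
  proof
    show "0 < r i" if "i \<in> {1..n}" for i
      using pack that unfolding homothetic_packing_def by blast
    show "1 \<le> s" "s < n" using s by auto
    show "(\<Sum>i=1..s. r i) = (\<Sum>i=s+1..n. r i)" by (fact i)
    show "p i = (row_centre 1 r i, r i)" if "i \<in> {1..s}" for i
      using that ii(1) iii1 row_centre_eq_pred_sum[of i 1 r]
      by (cases "i = 1") (auto simp: row_centre_def)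
    show "p i = (row_centre (s+1) r i, - r i)" if "i \<in> {s+1..n}" for i
      using that ii(2) iii2 row_centre_eq_pred_sum[of i "s+1" r]
      by (cases "i = s+1") (auto simp: row_centre_def)
  qed
  show ?thesis by (fact graph_connected)
qed

end
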